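(* Let $\mathbf{S}\in\mathbb{R}^{d_v\times d_k}$ be a nonzero matrix with singular value decomposition $\mathbf{S}=\sum_{i=1}^{d}\sigma_i\mathbf{u}_i\mathbf{w}_i^\top$, $d=\min(d_k,d_v)$, $\sigma_1\ge\cdots\ge\sigma_d\ge0$ (so $\mathbf{w}_1\in\mathbb{R}^{d_k}$ is a unit right singular vector for the largest singular value $\sigma_1$). Let $\mathbf{q}^*\in\mathbb{R}^{d_k}$ (the pure query) and $\mathbf{n}\in\mathbb{R}^{d_k}$ (noise) be nonzero, let $\tilde{\mathbf{q}}=\mathbf{q}^*+\mathbf{n}$, $\mathbf{o}=\mathbf{S}\tilde{\mathbf{q}}$, $\mathbf{o}^*=\mathbf{S}\mathbf{q}^*$, and assume $\mathbf{o}^*\neq\mathbf{0}$. Define $\delta=|\mathbf{n}^\top\mathbf{w}_1|/\|\mathbf{n}\|_2$ and $\gamma=|\mathbf{q}^{*\top}\mathbf{w}_1|/\|\mathbf{q}^*\|_2$. Then $$\frac{\delta}{\sqrt{\operatorname{er}(\mathbf{S})}}\le\frac{\|\mathbf{o}-\mathbf{o}^*\|_2/\|\mathbf{o}^*\|_2}{\|\mathbf{n}\|_2/\|\mathbf{q}^*\|_2},$$ and, if $\gamma>0$, $$\frac{\|\mathbf{o}-\mathbf{o}^*\|_2/\|\mathbf{o}^*\|_2}{\|\mathbf{n}\|_2/\|\mathbf{q}^*\|_2}\le\frac{\sqrt{\operatorname{er}(\mathbf{S})}}{\gamma}.$$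
   Context: For a nonzero matrix $\mathbf{S}$ with singular values $\sigma_1\ge\sigma_2\ge\cdots\ge0$, the effective rank is $\operatorname{er}(\mathbf{S})=\|\mathbf{S}\|_F^2/\|\mathbf{S}\|_2^2=\sum_i\sigma_i^2/\sigma_1^2$. *)

theory Defs
  imports "HOL-Analysis.Analysis"
begin

text \<open>Matrices S in R^(d_v x d_k) are represented as real^'k^'v (rows indexed by 'v).\<close>

definition spec_norm :: "real^'k^'v \<Rightarrow> real" where
  "spec_norm S = onorm (\<lambda>x. S *v x)"

definition frob_norm_sq :: "real^'k^'v \<Rightarrow> real" where
  "frob_norm_sq S = (\<Sum>i\<in>UNIV. \<Sum>j\<in>UNIV. (S $ i $ j)^2)"

definition eff_rank :: "real^'k^'v \<Rightarrow> real" where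
  "eff_rank S = frob_norm_sq S / (spec_norm S)^2"

definition top_right_singular_vector :: "real^'k^'v \<Rightarrow> real^'k \<Rightarrow> bool" where
  "top_right_singular_vector S w \<longleftrightarrow>
     norm w = 1 \<and> (\<exists>u. norm u = 1 \<and> S *v w = spec_norm S *\<^sub>R u
                       \<and> transpose S *v u = spec_norm S *\<^sub>R w)"

end

theory Submission
  imports Defs
begin

text \<open>Write \<open>g x = \<parallel>S x\<parallel> / \<parallel>x\<parallel>\<close> for the gain of \<open>S\<close> on \<open>x\<close>. The quantity bounded in
  the theorem is \<open>g n / g q\<^sup>*\<close>. Cauchy--Schwarz row by row gives \<open>g x \<le> \<parallel>S\<parallel>\<^sub>F\<close>,
  and pairing \<open>S x\<close> with the left singular vector \<open>u\<^sub>1\<close> gives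
  \<open>\<sigma>\<^sub>1 \<bar>x\<^sup>T w\<^sub>1\<bar> / \<parallel>x\<parallel> \<le> g x\<close>. Hence \<open>\<sigma>\<^sub>1 \<delta> / \<parallel>S\<parallel>\<^sub>F \<le> g n / g q\<^sup>* \<le> \<parallel>S\<parallel>\<^sub>F / (\<sigma>\<^sub>1 \<gamma>)\<close>,
  and \<open>\<parallel>S\<parallel>\<^sub>F / \<sigma>\<^sub>1 = \<surd>er(S)\<close>.\<close>

lemma frob_norm_sq_nonneg: "0 \<le> frob_norm_sq (S :: real^'k^'v)"
  by (simp add: frob_norm_sq_def sum_nonneg)

lemma norm_matrix_vector_mult_le_frob:
  fixes S :: "real^'k^'v"
  shows "norm (S *v x) \<le> sqrt (frob_norm_sq S) * norm x"
proof -
  have "(norm (S *v x))\<^sup>2 = (\<Sum>i\<in>UNIV. ((S *v x) $ i)\<^sup>2)"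
    by (simp add: norm_vec_def L2_set_def sum_nonneg)
  also have "\<dots> \<le> (\<Sum>i\<in>UNIV. (norm (S $ i))\<^sup>2 * (norm x)\<^sup>2)"
  proof (rule sum_mono)
    fix i
    have "\<bar>(S *v x) $ i\<bar> \<le> norm (S $ i) * norm x"
      unfolding matrix_vector_mul_component by (rule Cauchy_Schwarz_ineq2)
    then show "((S *v x) $ i)\<^sup>2 \<le> (norm (S $ i))\<^sup>2 * (norm x)\<^sup>2"
      by (metis abs_ge_zero power_mono power_mult_distrib power2_abs)
  qed
  also have "\<dots> = (sqrt (frob_norm_sq S) * norm x)\<^sup>2"
    by (simp add: frob_norm_sq_def norm_vec_def L2_set_def sum_nonneg sum_distrib_right
        power_mult_distrib)
  finally show ?thesis
    by (rule power2_le_imp_le) (simp add: frob_norm_sq_nonneg)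
qed

lemma gain_le_frob:
  fixes S :: "real^'k^'v"
  shows "norm (S *v x) / norm x \<le> sqrt (frob_norm_sq S)"
  using norm_matrix_vector_mult_le_frob[of S x]
  by (cases "x = 0") (simp_all add: divide_le_eq frob_norm_sq_nonneg)

lemma spec_norm_nonneg: "0 \<le> spec_norm (S :: real^'k^'v)"
  by (simp add: spec_norm_def onorm_pos_le)

lemma spec_norm_pos:
  fixes S :: "real^'k^'v"
  assumes "S \<noteq> 0"
  shows "0 < spec_norm S"
proof -
  have "\<not> (\<forall>x. S *v x = 0)"
    using assms matrix_eq[of S 0] by simp
  then show ?thesis
    unfolding spec_norm_def by (simp add: onorm_pos_lt)
qed

lemma top_right_singular_vector_inner_le:
  fixes S :: "real^'k^'v"
  assumes "top_right_singular_vector S w"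
  shows "spec_norm S * \<bar>x \<bullet> w\<bar> \<le> norm (S *v x)"
proof -
  obtain u where u: "norm u = 1" "transpose S *v u = spec_norm S *\<^sub>R w"
    using assms unfolding top_right_singular_vector_def by blast
  have "u \<bullet> (S *v x) = (transpose S *v u) \<bullet> x"
    by (simp add: dot_lmul_matrix)
  then have "spec_norm S * \<bar>x \<bullet> w\<bar> = \<bar>u \<bullet> (S *v x)\<bar>"
    using u(2) spec_norm_nonneg[of S] by (simp add: abs_mult inner_commute)
  also have "\<dots> \<le> norm u * norm (S *v x)"
    by (rule Cauchy_Schwarz_ineq2)
  finally show ?thesis
    using u(1) by simp
qed

lemma cosine_le_gain:
  fixes S :: "real^'k^'v"
  assumes "top_right_singular_vector S w"
  shows "spec_norm S * (\<bar>x \<bullet> w\<bar> / norm x) \<le> norm (S *v x) / norm x"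
  using divide_right_mono[OF top_right_singular_vector_inner_le[OF assms, of x], of "norm x"]
  by simp

lemma sqrt_eff_rank_eq:
  fixes S :: "real^'k^'v"
  assumes "S \<noteq> 0"
  shows "sqrt (eff_rank S) = sqrt (frob_norm_sq S) / spec_norm S"
  using spec_norm_pos[OF assms] by (simp add: eff_rank_def real_sqrt_divide)

theorem theorem2p4:
  fixes S :: "real^'k^'v" and w1 qs n :: "real^'k"
  assumes "S \<noteq> 0"
    and "top_right_singular_vector S w1"
    and "qs \<noteq> 0" and "n \<noteq> 0"
    and "S *v qs \<noteq> 0"
  shows "(\<bar>n \<bullet> w1\<bar> / norm n) / sqrt (eff_rank S)
           \<le> (norm (S *v (qs + n) - S *v qs) / norm (S *v qs)) / (norm n / norm qs)
         \<and> (\<bar>qs \<bullet> w1\<bar> / norm qs > 0 \<longrightarrow>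
           (norm (S *v (qs + n) - S *v qs) / norm (S *v qs)) / (norm n / norm qs)
           \<le> sqrt (eff_rank S) / (\<bar>qs \<bullet> w1\<bar> / norm qs))"
proof -
  define gain where "gain x = norm (S *v x) / norm x" for x
  define \<sigma> where "\<sigma> = spec_norm S"
  define F where "F = sqrt (frob_norm_sq S)"
  have \<sigma>_pos: "0 < \<sigma>"
    unfolding \<sigma>_def using spec_norm_pos[OF assms(1)] .
  have gain_qs_pos: "0 < gain qs"
    unfolding gain_def using assms(3,5) by simp
  have ratio: "(norm (S *v (qs + n) - S *v qs) / norm (S *v qs)) / (norm n / norm qs)
      = gain n / gain qs"
    by (simp add: gain_def matrix_vector_right_distrib)
  have er: "sqrt (eff_rank S) = F / \<sigma>"
    unfolding F_def \<sigma>_def by (rule sqrt_eff_rank_eq[OF assms(1)])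
  have "(\<bar>n \<bullet> w1\<bar> / norm n) / (F / \<sigma>) = \<sigma> * (\<bar>n \<bullet> w1\<bar> / norm n) / F"
    by simp
  also have "\<dots> \<le> gain n / gain qs"
    using cosine_le_gain[OF assms(2)] gain_le_frob gain_qs_pos
    by (intro frac_le) (simp_all add: gain_def F_def \<sigma>_def)
  finally have lower: "(\<bar>n \<bullet> w1\<bar> / norm n) / (F / \<sigma>) \<le> gain n / gain qs" .
  have upper: "gain n / gain qs \<le> (F / \<sigma>) / (\<bar>qs \<bullet> w1\<bar> / norm qs)"
    if "\<bar>qs \<bullet> w1\<bar> / norm qs > 0"
  proof -
    have "0 < \<sigma> * (\<bar>qs \<bullet> w1\<bar> / norm qs)"
      using \<sigma>_pos that by (rule mult_pos_pos)
    then have "gain n / gain qs \<le> F / (\<sigma> * (\<bar>qs \<bullet> w1\<bar> / norm qs))"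
      using cosine_le_gain[OF assms(2)] gain_le_frob
      by (intro frac_le) (simp_all add: gain_def F_def \<sigma>_def frob_norm_sq_nonneg)
    then show ?thesis
      by simp
  qed
  show ?thesis
    unfolding ratio er using lower upper by blast
qed

end
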